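(* Let $\mathcal S$ be a finite poset, $\chi=(\chi_i)_{i\in\mathcal S}\in\mathbb R_+^{|\mathcal S|}$, and let $\mathcal U=(U;U_i)_{i\in\mathcal S}$ be an indecomposable $\chi$-representation of $\mathcal S$. Then the subspace representation $F(\mathcal U)$ is $\chi$-stable.
   Context: A unitary representation of a finite poset $\mathcal S$ is a tuple $(U;U_i)_{i\in\mathcal S}$ of a finite-dimensional complex unitary space $U$ and subspaces $U_i$ with $U_i\subseteq U_j$ whenever $i\prec j$. It is a $\chi$-representation if $\sum_{i\in\mathcal S}\chi_iP_{U_i}=\mathbb 1$, where $P_{U_i}$ is the orthogonal projection onto $U_i$. It is indecomposable if it is not unitarily equivalent to an orthogonal sum $(U'\perp U'';U'_i\perp U''_i)$ of two nonzero unitary representations. $F(\mathcal U)$ is the underlying subspace representation (forgetting the inner product). A subspace representation $(V;V_i)_{i\in\mathcal S}$ is $\chi$-stable if $\sum_{i\in\mathcal S}\chi_i\dim V_i=\dim V$ and $\sum_{i\in\mathcal S}\chi_i\dim(V_i\cap M)<\dim M$ for every subspace $M$ with $0\neq M\subsetneq V$. *)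

theory Defs
  imports "HOL-Analysis.Analysis"
begin

text \<open>The unitary space is modelled as the standard complex Hilbert space
  \<open>complex ^ 'n\<close> with the Hermitian inner product below (every finite-dimensional
  nonzero complex unitary space is isometric to such a space).\<close>

definition herm :: "complex ^ 'n \<Rightarrow> complex ^ 'n \<Rightarrow> complex" where
  "herm x y = (\<Sum>k\<in>UNIV. x $ k * cnj (y $ k))"

definition orth_proj :: "(complex ^ 'n) set \<Rightarrow> complex ^ 'n \<Rightarrow> complex ^ 'n" where
  "orth_proj W x = (THE p. p \<in> W \<and> (\<forall>w\<in>W. herm (x - p) w = 0))"

definition orth_compl :: "(complex ^ 'n) set \<Rightarrow> (complex ^ 'n) set" where
  "orth_compl W = {x. \<forall>w\<in>W. herm x w = 0}"

definition unitary_rep :: "'i::order set \<Rightarrow> ('i \<Rightarrow> (complex ^ 'n) set) \<Rightarrow> bool" where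
  "unitary_rep S Us \<longleftrightarrow> finite S \<and> (\<forall>i\<in>S. vec.subspace (Us i)) \<and>
     (\<forall>i\<in>S. \<forall>j\<in>S. i < j \<longrightarrow> Us i \<subseteq> Us j)"

definition chi_rep :: "'i::order set \<Rightarrow> ('i \<Rightarrow> real) \<Rightarrow> ('i \<Rightarrow> (complex ^ 'n) set) \<Rightarrow> bool" where
  "chi_rep S chi Us \<longleftrightarrow> unitary_rep S Us \<and>
     (\<forall>x. (\<Sum>i\<in>S. complex_of_real (chi i) *s orth_proj (Us i) x) = x)"

text \<open>Decomposable: unitarily equivalent to an orthogonal sum of two nonzero
  unitary representations, i.e. (internally) there is a subspace W with
  0 \<noteq> W \<noteq> whole space such that every Us i = (Us i \<inter> W) \<perp> (Us i \<inter> orth_compl W).\<close>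
definition indecomposable :: "'i::order set \<Rightarrow> ('i \<Rightarrow> (complex ^ 'n) set) \<Rightarrow> bool" where
  "indecomposable S Us \<longleftrightarrow>
     \<not> (\<exists>W. vec.subspace W \<and> W \<noteq> {0} \<and> W \<noteq> UNIV \<and>
          (\<forall>i\<in>S. Us i = {a + b | a b. a \<in> Us i \<inter> W \<and> b \<in> Us i \<inter> orth_compl W}))"

text \<open>\<chi>-stability of the underlying subspace representation (V; V_i), V = whole space.\<close>
definition chi_stable :: "'i set \<Rightarrow> ('i \<Rightarrow> real) \<Rightarrow> ('i \<Rightarrow> (complex ^ 'n) set) \<Rightarrow> bool" where
  "chi_stable S chi Vs \<longleftrightarrow>
     (\<Sum>i\<in>S. chi i * real (vec.dim (Vs i))) = real (vec.dim (UNIV :: (complex ^ 'n) set)) \<and>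
     (\<forall>M. vec.subspace M \<and> M \<noteq> {0} \<and> M \<noteq> UNIV \<longrightarrow>
        (\<Sum>i\<in>S. chi i * real (vec.dim (Vs i \<inter> M))) < real (vec.dim M))"

end

theory Submission
  imports Defs
begin

text \<open>Regard \<open>complex ^ 'n\<close> as a real Euclidean space: \<open>Re (herm x y)\<close> is the real inner
  product, orthogonal complements of and projections onto complex subspaces are the real ones, and
  real dimensions are twice the complex ones. Compressing the resolution \<open>\<Sum>\<^sub>i \<chi>_i P_(U_i) = 1\<close>
  by the projection \<open>P_M\<close> onto a subspace \<open>M\<close> and taking traces gives
  \<open>dim M = \<Sum>\<^sub>i \<chi>_i tr (P_M P_(U_i) P_M)\<close>. In an orthonormal basis of \<open>M\<close> adapted to \<open>U \<inter> M\<close>,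
  \<open>tr (P_M P_U P_M) = dim (U \<inter> M) + \<Sum>\<^sub>c |P_U c|\<^sup>2\<close>, where \<open>c\<close> runs over an orthonormal basis
  of \<open>M \<ominus> (U \<inter> M)\<close>. Hence \<open>\<Sum>\<^sub>i \<chi>_i dim (U_i \<inter> M) \<le> dim M\<close>, with equality when \<open>M\<close> is the
  whole space. Equality forces \<open>P_(U_i) c = 0\<close> for all those \<open>c\<close>, i.e. \<open>P_M\<close> maps every \<open>U_i\<close>
  into itself; then \<open>U_i = (U_i \<inter> M) \<oplus> (U_i \<inter> M\<^sup>\<bottom>)\<close> for all \<open>i\<close>, which indecomposability rules
  out for a proper nonzero \<open>M\<close>.\<close>

section \<open>Orthogonal projections and orthonormal bases\<close>

lemma mem_orthogonal_comp: "x \<in> W\<^sup>\<bottom> \<longleftrightarrow> (\<forall>y\<in>W. y \<bullet> x = 0)"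
  by (simp add: orthogonal_comp_def orthogonal_def)

definition proj :: "'a::euclidean_space set \<Rightarrow> 'a \<Rightarrow> 'a" where
  "proj S x = (THE p. p \<in> S \<and> x - p \<in> S\<^sup>\<bottom>)"

lemma orthogonal_decomposition_unique:
  assumes "subspace S" "p \<in> S" "x - p \<in> S\<^sup>\<bottom>" "q \<in> S" "x - q \<in> S\<^sup>\<bottom>"
  shows "p = q"
proof -
  have "p - q = (x - q) - (x - p)"
    by simp
  then have "p - q \<in> S \<inter> S\<^sup>\<bottom>"
    using assms subspace_diff subspace_orthogonal_comp by (metis IntI)
  then show ?thesis
    using orthogonal_Int_0[OF assms(1)] by simp
qed

lemma proj_decomposition:
  fixes S :: "'a::euclidean_space set"
  assumes "subspace S"
  shows "proj S x \<in> S" and "x - proj S x \<in> S\<^sup>\<bottom>"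
proof -
  obtain p q where "p \<in> S" "q \<in> S\<^sup>\<bottom>" "x = p + q"
    using subspace_sum_orthogonal_comp[OF assms] set_plus_elim by (metis UNIV_I)
  then have "\<exists>!p. p \<in> S \<and> x - p \<in> S\<^sup>\<bottom>"
    using orthogonal_decomposition_unique[OF assms] by (metis add_diff_cancel_left')
  from theI'[OF this] show "proj S x \<in> S" "x - proj S x \<in> S\<^sup>\<bottom>"
    unfolding proj_def by auto
qed

lemma proj_unique:
  assumes "subspace S" "p \<in> S" "x - p \<in> S\<^sup>\<bottom>"
  shows "proj S x = p"
  using orthogonal_decomposition_unique[OF assms(1) proj_decomposition[OF assms(1)]] assms
  by blast

lemma proj_UNIV: "proj UNIV x = x"
  by (rule proj_unique) (auto simp: mem_orthogonal_comp)

lemma proj_id: "subspace S \<Longrightarrow> x \<in> S \<Longrightarrow> proj S x = x"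
  by (rule proj_unique) (auto simp: mem_orthogonal_comp)

lemma proj_eq_0: "subspace S \<Longrightarrow> x \<in> S\<^sup>\<bottom> \<Longrightarrow> proj S x = 0"
  by (rule proj_unique) (auto simp: subspace_0)

lemma proj_idem: "subspace S \<Longrightarrow> proj S (proj S x) = proj S x"
  by (simp add: proj_id proj_decomposition)

lemma linear_proj:
  assumes "subspace S"
  shows "linear (proj S)"
proof (rule linearI)
  note P = proj_decomposition[OF assms]
  note C = subspace_orthogonal_comp[of S]
  fix x y
  have "x + y - (proj S x + proj S y) = (x - proj S x) + (y - proj S y)"
    by simp
  then show "proj S (x + y) = proj S x + proj S y"
    by (metis P assms proj_unique subspace_add C)
next
  note P = proj_decomposition[OF assms]
  fix c :: real and x
  have "c *\<^sub>R x - c *\<^sub>R proj S x = c *\<^sub>R (x - proj S x)"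
    by (simp add: scaleR_diff_right)
  then show "proj S (c *\<^sub>R x) = c *\<^sub>R proj S x"
    by (metis P assms proj_unique subspace_scale subspace_orthogonal_comp)
qed

lemma proj_inner_commute:
  assumes "subspace S"
  shows "proj S x \<bullet> y = x \<bullet> proj S y"
proof -
  note P = proj_decomposition[OF assms]
  have "proj S x \<bullet> (y - proj S y) = 0" "proj S y \<bullet> (x - proj S x) = 0"
    using P by (auto simp: mem_orthogonal_comp)
  then show ?thesis
    by (simp add: inner_diff_right inner_commute)
qed

lemma proj_inner_self:
  assumes "subspace S"
  shows "proj S x \<bullet> x = (norm (proj S x))\<^sup>2"
  using proj_inner_commute[OF assms, of x "proj S x"]
  by (simp add: proj_idem[OF assms] power2_norm_eq_inner inner_commute)

definition orthonormal_basis :: "'a::euclidean_space set \<Rightarrow> 'a set \<Rightarrow> bool" where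
  "orthonormal_basis B S \<longleftrightarrow>
     B \<subseteq> S \<and> pairwise orthogonal B \<and> (\<forall>x\<in>B. norm x = 1) \<and> span B = S"

lemma orthonormal_basis_exists:
  assumes "subspace S"
  obtains B where "orthonormal_basis B S"
  using orthonormal_basis_subspace[OF assms] unfolding orthonormal_basis_def by metis

lemma orthonormal_basis_independent:
  assumes "orthonormal_basis B S"
  shows "independent B" and "finite B"
proof -
  show "independent B"
    using assms pairwise_orthogonal_independent by (force simp: orthonormal_basis_def)
  then show "finite B"
    by (rule finiteI_independent)
qed

lemma orthonormal_basis_card: "orthonormal_basis B S \<Longrightarrow> card B = dim S"
  by (metis dim_span_eq_card_independent orthonormal_basis_def orthonormal_basis_independent(1))

lemma orthonormal_basis_inner:
  "orthonormal_basis B S \<Longrightarrow> b \<in> B \<Longrightarrow> c \<in> B \<Longrightarrow> b \<bullet> c = (if b = c then 1 else 0)"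
  unfolding orthonormal_basis_def pairwise_def orthogonal_def by (auto simp: norm_eq_1)

lemma orthonormal_basis_expansion:
  assumes B: "orthonormal_basis B S" and "x \<in> S"
  shows "x = (\<Sum>b\<in>B. (x \<bullet> b) *\<^sub>R b)"
proof -
  have fin: "finite B"
    using orthonormal_basis_independent[OF B] by simp
  have "x \<in> span B"
    using assms by (simp add: orthonormal_basis_def)
  then obtain u where u: "x = (\<Sum>b\<in>B. u b *\<^sub>R b)"
    using span_finite[OF fin] by auto
  have "x \<bullet> c = u c" if "c \<in> B" for c
  proof -
    have "x \<bullet> c = (\<Sum>b\<in>B. if b = c then u c else 0)"
      by (simp add: u inner_sum_left orthonormal_basis_inner[OF B _ that] if_distrib cong: if_cong)
    then show ?thesis
      using fin that by simp
  qed
  then show ?thesis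
    by (simp add: u cong: sum.cong)
qed

lemma orthonormal_basis_Un:
  assumes T: "subspace T" and M: "subspace M" and "T \<subseteq> M"
    and A: "orthonormal_basis A T" and A': "orthonormal_basis A' (M \<inter> T\<^sup>\<bottom>)"
  shows "orthonormal_basis (A \<union> A') M" and "A \<inter> A' = {}"
proof -
  have "A \<subseteq> T" "A' \<subseteq> T\<^sup>\<bottom>"
    using A A' by (auto simp: orthonormal_basis_def)
  then have cross: "a \<bullet> b = 0" if "a \<in> A" "b \<in> A'" for a b
    using that by (auto simp: mem_orthogonal_comp subset_iff)
  then show "A \<inter> A' = {}"
    using A by (force simp: orthonormal_basis_def)
  have sub: "A \<union> A' \<subseteq> M"
    using A A' \<open>T \<subseteq> M\<close> by (auto simp: orthonormal_basis_def)
  have "pairwise orthogonal (A \<union> A')"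
    using A A' cross unfolding orthonormal_basis_def pairwise_def orthogonal_def
    by (metis Un_iff inner_commute)
  moreover have "M \<subseteq> span (A \<union> A')"
  proof
    fix x
    assume "x \<in> M"
    have "proj T x \<in> span A"
      using A proj_decomposition[OF T] by (simp add: orthonormal_basis_def)
    moreover have "x - proj T x \<in> span A'"
      using A' \<open>x \<in> M\<close> \<open>T \<subseteq> M\<close> proj_decomposition[OF T, of x]
      by (auto simp: orthonormal_basis_def intro: subspace_diff[OF M])
    ultimately have "proj T x + (x - proj T x) \<in> span (A \<union> A')"
      by (meson span_add span_mono sup_ge1 sup_ge2 subsetD)
    then show "x \<in> span (A \<union> A')"
      by simp
  qed
  ultimately show "orthonormal_basis (A \<union> A') M"
    using A A' sub span_minimal[OF sub M] unfolding orthonormal_basis_def by blast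
qed

lemma orthonormal_basis_extend:
  fixes T M :: "'a::euclidean_space set"
  assumes T: "subspace T" and M: "subspace M" and "T \<subseteq> M"
    and A': "orthonormal_basis A' (M \<inter> T\<^sup>\<bottom>)"
  obtains A A'' where "orthonormal_basis A T" and "A'' \<subseteq> M\<^sup>\<bottom>"
    and "orthonormal_basis (A \<union> A' \<union> A'') UNIV"
    and "A \<inter> A' = {}" and "(A \<union> A') \<inter> A'' = {}"
proof -
  obtain A where A: "orthonormal_basis A T"
    using orthonormal_basis_exists[OF T] .
  obtain A'' where A'': "orthonormal_basis A'' (UNIV \<inter> M\<^sup>\<bottom>)"
    using orthonormal_basis_exists[OF subspace_inter[OF subspace_UNIV subspace_orthogonal_comp]] .
  have AA': "orthonormal_basis (A \<union> A') M" "A \<inter> A' = {}"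
    using orthonormal_basis_Un[OF T M \<open>T \<subseteq> M\<close> A A'] by auto
  moreover have "orthonormal_basis (A \<union> A' \<union> A'') UNIV" "(A \<union> A') \<inter> A'' = {}"
    using orthonormal_basis_Un[OF M subspace_UNIV _ AA'(1) A''] by auto
  moreover have "A'' \<subseteq> M\<^sup>\<bottom>"
    using A'' by (simp add: orthonormal_basis_def)
  ultimately show thesis
    using that A by blast
qed

section \<open>Traces of compressed projections\<close>

definition trace_op :: "('a::euclidean_space \<Rightarrow> 'a) \<Rightarrow> real" where
  "trace_op f = (\<Sum>b\<in>Basis. f b \<bullet> b)"

lemma trace_op_orthonormal_basis:
  assumes f: "linear f" and C: "orthonormal_basis C UNIV"
  shows "trace_op f = (\<Sum>c\<in>C. f c \<bullet> c)"
proof -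
  have "f c \<bullet> c = (\<Sum>b\<in>Basis. (c \<bullet> b) * (f b \<bullet> c))" for c
  proof -
    have "f c = (\<Sum>b\<in>Basis. (c \<bullet> b) *\<^sub>R f b)"
      by (subst euclidean_representation[symmetric, of c])
         (simp add: linear_sum[OF f] linear_scale[OF f] o_def)
    then show ?thesis
      by (simp add: inner_sum_left)
  qed
  then have "(\<Sum>c\<in>C. f c \<bullet> c) = (\<Sum>b\<in>Basis. \<Sum>c\<in>C. (f b \<bullet> c) * (c \<bullet> b))"
    by (simp add: sum.swap[of _ C] mult.commute)
  also have "\<dots> = (\<Sum>b\<in>Basis. f b \<bullet> b)"
  proof (rule sum.cong[OF refl])
    fix b :: 'a
    have "f b \<bullet> b = (\<Sum>c\<in>C. (f b \<bullet> c) *\<^sub>R c) \<bullet> b"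
      using orthonormal_basis_expansion[OF C, of "f b"] by simp
    then show "(\<Sum>c\<in>C. (f b \<bullet> c) * (c \<bullet> b)) = f b \<bullet> b"
      by (simp add: inner_sum_left)
  qed
  finally show ?thesis
    unfolding trace_op_def by simp
qed

lemma trace_op_sum:
  "trace_op (\<lambda>x. \<Sum>i\<in>S. c i *\<^sub>R f i x) = (\<Sum>i\<in>S. c i * trace_op (f i))"
  unfolding trace_op_def by (simp add: inner_sum_left sum_distrib_left) (rule sum.swap)

lemma trace_op_compression:
  fixes U M :: "'a::euclidean_space set"
  assumes U: "subspace U" and M: "subspace M"
    and A': "orthonormal_basis A' (M \<inter> (U \<inter> M)\<^sup>\<bottom>)"
  shows "trace_op (\<lambda>x. proj M (proj U (proj M x))) = dim (U \<inter> M) + (\<Sum>c\<in>A'. (norm (proj U c))\<^sup>2)"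
proof -
  obtain A A'' where A: "orthonormal_basis A (U \<inter> M)" and A'': "A'' \<subseteq> M\<^sup>\<bottom>"
    and C: "orthonormal_basis (A \<union> A' \<union> A'') UNIV"
    and disjoint: "A \<inter> A' = {}" "(A \<union> A') \<inter> A'' = {}"
    using orthonormal_basis_extend[OF subspace_inter[OF U M] M _ A'] by blast
  define f where "f = (\<lambda>x. proj M (proj U (proj M x)))"
  have "linear f"
    using linear_compose[OF linear_compose[OF linear_proj[OF M] linear_proj[OF U]] linear_proj[OF M]]
    by (simp add: f_def o_def)
  have "f c \<bullet> c = 1" if "c \<in> A" for c
  proof -
    have "c \<in> U" "c \<in> M" "norm c = 1"
      using that A by (auto simp: orthonormal_basis_def)
    then show ?thesis
      by (simp add: f_def proj_id[OF M] proj_id[OF U] norm_eq_1)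
  qed
  moreover have "f c \<bullet> c = (norm (proj U c))\<^sup>2" if "c \<in> A'" for c
  proof -
    have "c \<in> M"
      using that A' by (auto simp: orthonormal_basis_def)
    then show ?thesis
      by (simp add: f_def proj_id[OF M] proj_inner_commute[OF M] proj_inner_self[OF U])
  qed
  moreover have "f c = 0" if "c \<in> A''" for c
    using that A'' linear_0[OF linear_proj[OF U]] linear_0[OF linear_proj[OF M]]
    by (auto simp: f_def proj_eq_0[OF M])
  moreover have "finite (A \<union> A' \<union> A'')"
    using C by (rule orthonormal_basis_independent)
  ultimately have "(\<Sum>c\<in>A \<union> A' \<union> A''. f c \<bullet> c) = card A + (\<Sum>c\<in>A'. (norm (proj U c))\<^sup>2)"
    using disjoint by (simp add: sum.union_disjoint)
  then show ?thesis
    using trace_op_orthonormal_basis[OF \<open>linear f\<close> C] orthonormal_basis_card[OF A]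
    by (simp add: f_def)
qed

lemma trace_op_proj:
  fixes U :: "'a::euclidean_space set"
  assumes U: "subspace U"
  shows "trace_op (proj U) = dim U"
proof -
  obtain A' where A': "orthonormal_basis A' (UNIV \<inter> (U \<inter> UNIV)\<^sup>\<bottom>)"
    using orthonormal_basis_exists[OF subspace_inter[OF subspace_UNIV subspace_orthogonal_comp]] .
  have "A' \<subseteq> U\<^sup>\<bottom>"
    using A' by (simp add: orthonormal_basis_def)
  then have "proj U c = 0" if "c \<in> A'" for c
    using that proj_eq_0[OF U] by blast
  then show ?thesis
    using trace_op_compression[OF U subspace_UNIV A'] by (simp add: proj_UNIV)
qed

lemma dim_inter_le_trace_op_compression:
  fixes U M :: "'a::euclidean_space set"
  assumes U: "subspace U" and M: "subspace M"
  shows "dim (U \<inter> M) \<le> trace_op (\<lambda>x. proj M (proj U (proj M x)))"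
proof -
  obtain A' where A': "orthonormal_basis A' (M \<inter> (U \<inter> M)\<^sup>\<bottom>)"
    using orthonormal_basis_exists[OF subspace_inter[OF M subspace_orthogonal_comp]] .
  have "0 \<le> (\<Sum>c\<in>A'. (norm (proj U c))\<^sup>2)"
    by (intro sum_nonneg) simp
  then show ?thesis
    using trace_op_compression[OF U M A'] by linarith
qed

lemma proj_mem_if_orthogonal:
  fixes U M :: "'a::euclidean_space set"
  assumes U: "subspace U" and M: "subspace M"
    and orth: "M \<inter> (U \<inter> M)\<^sup>\<bottom> \<subseteq> U\<^sup>\<bottom>" and u: "u \<in> U"
  shows "proj M u \<in> U"
proof -
  have UM: "subspace (U \<inter> M)"
    using U M by (rule subspace_inter)
  define v where "v = proj M u"
  define b where "b = v - proj (U \<inter> M) v"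
  have "b \<in> M \<inter> (U \<inter> M)\<^sup>\<bottom>"
    unfolding b_def v_def
    using proj_decomposition[OF M, of u] proj_decomposition[OF UM, of "proj M u"]
    by (auto intro: subspace_diff[OF M])
  then have "b \<in> M" "b \<in> (U \<inter> M)\<^sup>\<bottom>" "b \<in> U\<^sup>\<bottom>"
    using orth by auto
  then have "b \<bullet> u = 0" "b \<bullet> (u - v) = 0" "b \<bullet> proj (U \<inter> M) v = 0"
    using u proj_decomposition(2)[OF M, of u] proj_decomposition(1)[OF UM, of v]
    by (auto simp: v_def mem_orthogonal_comp inner_commute)
  moreover have "b \<bullet> b = b \<bullet> u - b \<bullet> (u - v) - b \<bullet> proj (U \<inter> M) v"
    unfolding b_def by (simp add: inner_diff_right)
  ultimately have "v = proj (U \<inter> M) v"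
    by (simp add: b_def)
  then show ?thesis
    using proj_decomposition(1)[OF UM, of v] v_def by simp
qed

lemma proj_mem_if_trace_op_compression_le:
  fixes U M :: "'a::euclidean_space set"
  assumes U: "subspace U" and M: "subspace M"
    and le: "trace_op (\<lambda>x. proj M (proj U (proj M x))) \<le> dim (U \<inter> M)"
    and u: "u \<in> U"
  shows "proj M u \<in> U"
proof (rule proj_mem_if_orthogonal[OF U M _ u])
  obtain A' where A': "orthonormal_basis A' (M \<inter> (U \<inter> M)\<^sup>\<bottom>)"
    using orthonormal_basis_exists[OF subspace_inter[OF M subspace_orthogonal_comp]] .
  have "finite A'"
    using A' by (rule orthonormal_basis_independent)
  moreover have "(\<Sum>c\<in>A'. (norm (proj U c))\<^sup>2) = 0"
    using trace_op_compression[OF U M A'] le sum_nonneg[of A' "\<lambda>c. (norm (proj U c))\<^sup>2"]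
    by force
  ultimately have "proj U c = 0" if "c \<in> A'" for c
    using that sum_nonneg_eq_0_iff[of A' "\<lambda>c. (norm (proj U c))\<^sup>2"] by simp
  then have "A' \<subseteq> U\<^sup>\<bottom>"
    by (metis diff_zero proj_decomposition(2)[OF U] subsetI)
  then have "span A' \<subseteq> U\<^sup>\<bottom>"
    by (rule span_minimal[OF _ subspace_orthogonal_comp])
  then show "M \<inter> (U \<inter> M)\<^sup>\<bottom> \<subseteq> U\<^sup>\<bottom>"
    using A' by (simp add: orthonormal_basis_def)
qed

section \<open>Resolutions of the identity by weighted projections\<close>

lemma dim_eq_sum_compression_traces:
  fixes U :: "'i \<Rightarrow> 'a::euclidean_space set" and chi :: "'i \<Rightarrow> real"
  assumes resolution: "\<And>x. (\<Sum>i\<in>S. chi i *\<^sub>R proj (U i) x) = x"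
    and M: "subspace M"
  shows "dim M = (\<Sum>i\<in>S. chi i * trace_op (\<lambda>x. proj M (proj (U i) (proj M x))))"
proof -
  have compressed: "(\<lambda>x. \<Sum>i\<in>S. chi i *\<^sub>R proj M (proj (U i) (proj M x))) = proj M"
  proof
    fix x
    have "(\<Sum>i\<in>S. chi i *\<^sub>R proj M (proj (U i) (proj M x)))
        = proj M (\<Sum>i\<in>S. chi i *\<^sub>R proj (U i) (proj M x))"
      using linear_proj[OF M] by (simp add: linear_sum linear_scale o_def)
    then show "(\<Sum>i\<in>S. chi i *\<^sub>R proj M (proj (U i) (proj M x))) = proj M x"
      by (simp add: resolution proj_idem[OF M])
  qed
  have "real (dim M) = trace_op (proj M)"
    by (simp add: trace_op_proj[OF M])
  also have "\<dots> = trace_op (\<lambda>x. \<Sum>i\<in>S. chi i *\<^sub>R proj M (proj (U i) (proj M x)))"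
    by (simp only: compressed)
  also have "\<dots> = (\<Sum>i\<in>S. chi i * trace_op (\<lambda>x. proj M (proj (U i) (proj M x))))"
    by (rule trace_op_sum)
  finally show ?thesis .
qed

lemma sum_dim_eq_dim_UNIV:
  fixes U :: "'i \<Rightarrow> 'a::euclidean_space set" and chi :: "'i \<Rightarrow> real"
  assumes sub: "\<forall>i\<in>S. subspace (U i)"
    and resolution: "\<And>x. (\<Sum>i\<in>S. chi i *\<^sub>R proj (U i) x) = x"
  shows "(\<Sum>i\<in>S. chi i * dim (U i)) = real (dim (UNIV :: 'a set))"
  using dim_eq_sum_compression_traces[OF resolution subspace_UNIV] sub
  by (simp add: proj_UNIV trace_op_proj)

lemma proj_mem_if_dim_le_sum_dim_inter:
  fixes U :: "'i \<Rightarrow> 'a::euclidean_space set" and chi :: "'i \<Rightarrow> real"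
  assumes S: "finite S" and chi: "\<forall>i\<in>S. chi i > 0" and sub: "\<forall>i\<in>S. subspace (U i)"
    and resolution: "\<And>x. (\<Sum>i\<in>S. chi i *\<^sub>R proj (U i) x) = x"
    and M: "subspace M"
    and ge: "real (dim M) \<le> (\<Sum>i\<in>S. chi i * dim (U i \<inter> M))"
    and i: "i \<in> S" and u: "u \<in> U i"
  shows "proj M u \<in> U i"
proof -
  define t where "t i = trace_op (\<lambda>x. proj M (proj (U i) (proj M x)))" for i
  define d where "d i = real (dim (U i \<inter> M))" for i
  have excess_nonneg: "\<forall>j\<in>S. 0 \<le> chi j * (t j - d j)"
    using chi sub dim_inter_le_trace_op_compression[OF _ M] by (simp add: t_def d_def less_imp_le)
  have "(\<Sum>j\<in>S. chi j * (t j - d j)) = dim M - (\<Sum>j\<in>S. chi j * d j)"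
    using dim_eq_sum_compression_traces[OF resolution M]
    by (simp add: t_def right_diff_distrib sum_subtractf)
  also have "\<dots> \<le> 0"
    using ge by (simp add: d_def)
  moreover have "0 \<le> (\<Sum>j\<in>S. chi j * (t j - d j))"
    using excess_nonneg by (intro sum_nonneg) blast
  ultimately have "(\<Sum>j\<in>S. chi j * (t j - d j)) = 0"
    by linarith
  then have "chi i * (t i - d i) = 0"
    using sum_nonneg_eq_0_iff[OF S, of "\<lambda>j. chi j * (t j - d j)"] excess_nonneg i by simp
  moreover have "chi i > 0"
    using chi i by blast
  ultimately have "t i \<le> d i"
    by simp
  then show ?thesis
    using proj_mem_if_trace_op_compression_le[OF _ M _ u] sub i by (simp add: t_def d_def)
qed

lemma eq_orthogonal_sum_if_proj_mem:
  fixes U M :: "'a::euclidean_space set"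
  assumes U: "subspace U" and M: "subspace M" and into: "\<forall>u\<in>U. proj M u \<in> U"
  shows "U = {a + b | a b. a \<in> U \<inter> M \<and> b \<in> U \<inter> M\<^sup>\<bottom>}"
proof
  show "U \<subseteq> {a + b | a b. a \<in> U \<inter> M \<and> b \<in> U \<inter> M\<^sup>\<bottom>}"
  proof
    fix u
    assume "u \<in> U"
    then have "proj M u \<in> U \<inter> M" "u - proj M u \<in> U \<inter> M\<^sup>\<bottom>"
      using into proj_decomposition[OF M, of u] subspace_diff[OF U] by auto
    then show "u \<in> {a + b | a b. a \<in> U \<inter> M \<and> b \<in> U \<inter> M\<^sup>\<bottom>}"
      by force
  qed
qed (use subspace_add[OF U] in blast)

section \<open>Complex vectors as a real Euclidean space\<close>

lemma scaleR_eq_scale_complex: "c *\<^sub>R (x :: complex ^ 'n) = complex_of_real c *s x"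
  by (simp add: vec_eq_iff complex_eq_iff)

lemma scale_complex_eq_scaleR: "c *s (x :: complex ^ 'n) = Re c *\<^sub>R x + Im c *\<^sub>R (\<i> *s x)"
  by (simp add: vec_eq_iff complex_eq_iff)

lemma subspace_if_vec_subspace: "vec.subspace (W :: (complex ^ 'n) set) \<Longrightarrow> subspace W"
  unfolding subspace_def vec.subspace_def by (simp add: scaleR_eq_scale_complex)

lemma Re_herm: "Re (herm x y) = x \<bullet> y"
  unfolding herm_def inner_vec_def by (simp add: Re_sum inner_complex_def)

lemma Im_herm: "Im (herm x y) = x \<bullet> (\<i> *s y)"
  unfolding herm_def inner_vec_def by (simp add: Im_sum inner_complex_def algebra_simps)

lemma orth_compl_eq_orthogonal_comp:
  assumes W: "vec.subspace W"
  shows "orth_compl W = W\<^sup>\<bottom>"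
proof -
  have herm_eq_0: "herm x w = 0 \<longleftrightarrow> x \<bullet> w = 0 \<and> x \<bullet> (\<i> *s w) = 0" for x w
    by (simp add: complex_eq_iff Re_herm Im_herm)
  have "x \<in> orth_compl W \<longleftrightarrow> x \<in> W\<^sup>\<bottom>" for x
    using vec.subspace_scale[OF W, of _ \<i>]
    by (auto simp: orth_compl_def mem_orthogonal_comp herm_eq_0 inner_commute)
  then show ?thesis
    by blast
qed

lemma orth_proj_eq_proj:
  assumes W: "vec.subspace W"
  shows "orth_proj W = proj W"
proof
  fix x
  have "orth_proj W x = (THE p. p \<in> W \<and> x - p \<in> orth_compl W)"
    by (simp add: orth_proj_def orth_compl_def)
  then show "orth_proj W x = proj W x"
    by (simp add: proj_def orth_compl_eq_orthogonal_comp[OF W])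
qed

lemma disjoint_scale_i_image:
  assumes B: "vec.independent (B :: (complex ^ 'n) set)"
  shows "B \<inter> (\<lambda>b. \<i> *s b) ` B = {}"
proof (rule ccontr)
  assume "B \<inter> (\<lambda>b. \<i> *s b) ` B \<noteq> {}"
  then obtain b b' where bb': "b \<in> B" "b' \<in> B" "b = \<i> *s b'"
    by blast
  show False
  proof (cases "b = b'")
    case True
    then have "b = 0"
      using bb'(3) vector_mul_rcancel[of 1 b \<i>] by (simp add: complex_eq_iff)
    then show False
      using B bb'(1) vec.dependent_zero by blast
  next
    case False
    then have "b \<in> vec.span (B - {b})"
      using bb' by (simp add: vec.span_base vec.span_scale)
    then show False
      using B bb'(1) vec.dependent_def by blast
  qed
qed

lemma span_Un_scale_i_image:
  assumes "finite (B :: (complex ^ 'n) set)"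
  shows "span (B \<union> (\<lambda>b. \<i> *s b) ` B) = vec.span B"
proof
  show "span (B \<union> (\<lambda>b. \<i> *s b) ` B) \<subseteq> vec.span B"
    by (intro span_minimal subspace_if_vec_subspace vec.subspace_span)
       (auto intro: vec.span_base vec.span_scale)
  show "vec.span B \<subseteq> span (B \<union> (\<lambda>b. \<i> *s b) ` B)"
  proof
    fix x
    assume "x \<in> vec.span B"
    then obtain u where u: "x = (\<Sum>b\<in>B. u b *s b)"
      using vec.span_finite[OF assms] by blast
    have "u b *s b \<in> span (B \<union> (\<lambda>b. \<i> *s b) ` B)" if "b \<in> B" for b
      unfolding scale_complex_eq_scaleR[of "u b"]
      using that by (intro span_add span_scale span_base) auto
    then show "x \<in> span (B \<union> (\<lambda>b. \<i> *s b) ` B)"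
      unfolding u by (rule span_sum)
  qed
qed

lemma independent_Un_scale_i_image:
  assumes B: "vec.independent (B :: (complex ^ 'n) set)"
  shows "independent (B \<union> (\<lambda>b. \<i> *s b) ` B)"
  unfolding independent_explicit
proof (intro conjI allI impI ballI)
  let ?iB = "(\<lambda>b. \<i> *s b) ` B"
  have fin: "finite B"
    using B by (rule vec.finiteI_independent)
  then show "finite (B \<union> ?iB)"
    by simp
  have inj: "inj_on (\<lambda>b. \<i> *s b) B"
    by (auto simp: inj_on_def vec_eq_iff)
  fix c :: "complex ^ 'n \<Rightarrow> real"
  assume "(\<Sum>v\<in>B \<union> ?iB. c v *\<^sub>R v) = 0"
  then have "(\<Sum>b\<in>B. (complex_of_real (c b) + \<i> * complex_of_real (c (\<i> *s b))) *s b) = 0"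
    using fin disjoint_scale_i_image[OF B]
    by (simp add: sum.union_disjoint sum.reindex[OF inj] sum.distrib[symmetric]
        scaleR_eq_scale_complex vector_sadd_rdistrib vector_smult_assoc mult.commute)
  then have "complex_of_real (c b) + \<i> * complex_of_real (c (\<i> *s b)) = 0" if "b \<in> B" for b
    using vec.independentD[OF B fin order_refl,
        of "\<lambda>b. complex_of_real (c b) + \<i> * complex_of_real (c (\<i> *s b))"] that
    by blast
  then have "c b = 0 \<and> c (\<i> *s b) = 0" if "b \<in> B" for b
    using that by (simp add: complex_eq_iff)
  moreover fix v
  assume "v \<in> B \<union> ?iB"
  ultimately show "c v = 0"
    by blast
qed

lemma dim_eq_twice_vec_dim:
  assumes W: "vec.subspace (W :: (complex ^ 'n) set)"
  shows "dim W = 2 * vec.dim W"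
proof -
  obtain B where B: "B \<subseteq> W" "vec.independent B" "W \<subseteq> vec.span B" "card B = vec.dim W"
    by (rule vec.basis_exists)
  have fin: "finite B"
    using B(2) by (rule vec.finiteI_independent)
  have "W = span (B \<union> (\<lambda>b. \<i> *s b) ` B)"
    using span_Un_scale_i_image[OF fin] vec.span_subspace[OF B(1,3) W] by simp
  then have "dim W = card (B \<union> (\<lambda>b. \<i> *s b) ` B)"
    using dim_span_eq_card_independent independent_Un_scale_i_image[OF B(2)] by metis
  also have "\<dots> = 2 * card B"
    using fin disjoint_scale_i_image[OF B(2)]
    by (simp add: card_Un_disjoint card_image inj_on_def vec_eq_iff)
  finally show ?thesis
    using B(4) by simp
qed

lemma chi_rep_resolution:
  assumes "chi_rep S chi Us"
  shows "\<forall>i\<in>S. vec.subspace (Us i)" and "\<And>x. (\<Sum>i\<in>S. chi i *\<^sub>R proj (Us i) x) = x"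
proof -
  show sub: "\<forall>i\<in>S. vec.subspace (Us i)"
    using assms by (simp add: chi_rep_def unitary_rep_def)
  show "(\<Sum>i\<in>S. chi i *\<^sub>R proj (Us i) x) = x" for x
    using assms sub by (simp add: chi_rep_def scaleR_eq_scale_complex orth_proj_eq_proj)
qed

lemma sum_dim_eq_twice_sum_vec_dim:
  assumes "\<forall>i\<in>S. vec.subspace (V i :: (complex ^ 'n) set)"
  shows "(\<Sum>i\<in>S. chi i * real (dim (V i))) = 2 * (\<Sum>i\<in>S. chi i * real (vec.dim (V i)))"
  using assms by (simp add: dim_eq_twice_vec_dim sum_distrib_left mult.left_commute)

theorem lemma2:
  fixes S :: "'i::order set" and chi :: "'i \<Rightarrow> real"
    and Us :: "'i \<Rightarrow> (complex ^ 'n) set"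
  assumes "finite S"
    and "\<forall>i\<in>S. chi i > 0"
    and "chi_rep S chi Us"
    and "indecomposable S Us"
  shows "chi_stable S chi Us"
proof -
  note vsub = chi_rep_resolution(1)[OF assms(3)]
  note resolution = chi_rep_resolution(2)[OF assms(3)]
  have sub: "\<forall>i\<in>S. subspace (Us i)"
    using vsub subspace_if_vec_subspace by blast
  have "(\<Sum>i\<in>S. chi i * real (vec.dim (Us i))) = real (vec.dim (UNIV :: (complex ^ 'n) set))"
    using sum_dim_eq_dim_UNIV[OF sub resolution] sum_dim_eq_twice_sum_vec_dim[OF vsub]
      dim_eq_twice_vec_dim[OF vec.subspace_UNIV] by simp
  moreover have "(\<Sum>i\<in>S. chi i * real (vec.dim (Us i \<inter> M))) < real (vec.dim M)"
    if M: "vec.subspace M" "M \<noteq> {0}" "M \<noteq> UNIV" for M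
  proof (rule ccontr)
    assume "\<not> ?thesis"
    then have "real (dim M) \<le> (\<Sum>i\<in>S. chi i * real (dim (Us i \<inter> M)))"
      using sum_dim_eq_twice_sum_vec_dim[of S "\<lambda>i. Us i \<inter> M" chi] vsub M(1)
        dim_eq_twice_vec_dim[OF M(1)] by (simp add: vec.subspace_inter)
    then have "\<forall>i\<in>S. Us i = {a + b | a b. a \<in> Us i \<inter> M \<and> b \<in> Us i \<inter> orth_compl M}"
      using proj_mem_if_dim_le_sum_dim_inter[OF assms(1,2) sub resolution subspace_if_vec_subspace[OF M(1)]]
        eq_orthogonal_sum_if_proj_mem[OF _ subspace_if_vec_subspace[OF M(1)]] sub
      by (simp add: orth_compl_eq_orthogonal_comp[OF M(1)])
    then show False
      using assms(4) M unfolding indecomposable_def by blast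
  qed
  ultimately show ?thesis
    unfolding chi_stable_def by blast
qed

end
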